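(* For every Motzkin tree $T$ and every $m\in\mathbb{N}$, the following are equivalent: 1. there exists exactly one labeled Motzkin tree $t$ such that $\mathrm{skeleton}(t)=T$ and $t$ is $m$-open; 2. $\mathrm{ucs1\_aux}(T,m)$ holds.
   Context: Motzkin trees are the terms generated by a leaf $v$, a unary constructor $l$ and a binary constructor $a$. Labeled Motzkin trees are terms generated by $t ::= \mathrm{var}(i) \mid \mathrm{lam}(t) \mid \mathrm{app}(t,t)$ with $i\in\mathbb{N}$; they represent $\lambda$-terms in de Bruijn form. The skeleton function is defined by $\mathrm{skeleton}(\mathrm{var}(i))=v$, $\mathrm{skeleton}(\mathrm{lam}(t))=l(\mathrm{skeleton}(t))$, and $\mathrm{skeleton}(\mathrm{app}(t_1,t_2))=a(\mathrm{skeleton}(t_1),\mathrm{skeleton}(t_2))$. For $m\in\mathbb{N}$, "$t$ is $m$-open" is defined recursively: - $\mathrm{var}(i)$ is $m$-open iff $i<m$; - $\mathrm{lam}(t)$ is $m$-open iff $t$ is $(m+1)$-open; - $\mathrm{app}(t_1,t_2)$ is $m$-open iff both $t_1$ and $t_2$ are $m$-open. The predicate $\mathrm{ucs1\_aux}(T,m)$ holds iff, for every leaf of $T$, $m$ plus the number of unary nodes on the path from the root of $T$ to that leaf equals $1$. *)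

theory Defs
  imports Main
begin

datatype motzkin = v | l motzkin | a motzkin motzkin

datatype lmt = var nat | lam lmt | app lmt lmt

fun skeleton :: "lmt \<Rightarrow> motzkin" where
  "skeleton (var i) = v"
| "skeleton (lam t) = l (skeleton t)"
| "skeleton (app t1 t2) = a (skeleton t1) (skeleton t2)"

fun is_open :: "nat \<Rightarrow> lmt \<Rightarrow> bool" where
  "is_open m (var i) = (i < m)"
| "is_open m (lam t) = is_open (Suc m) t"
| "is_open m (app t1 t2) = (is_open m t1 \<and> is_open m t2)"

text \<open>Multiset-free description of leaves: the set of numbers of unary nodes on
  the root-to-leaf paths of a Motzkin tree (one entry per leaf path).\<close>
fun leaf_unary_counts :: "motzkin \<Rightarrow> nat set" where
  "leaf_unary_counts v = {0}"
| "leaf_unary_counts (l T) = Suc ` leaf_unary_counts T"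
| "leaf_unary_counts (a T1 T2) = leaf_unary_counts T1 \<union> leaf_unary_counts T2"

definition ucs1_aux :: "motzkin \<Rightarrow> nat \<Rightarrow> bool" where
  "ucs1_aux T m \<longleftrightarrow> (\<forall>k \<in> leaf_unary_counts T. m + k = 1)"

end

theory Submission
  imports Defs
begin

text \<open>The m-open terms with skeleton T are built structurally: a leaf contributes the m
  choices var 0, ..., var (m - 1), a unary node passes to its child with m + 1, and a
  binary node pairs up the terms of its two children. Since the constructors are injective,
  the set is a singleton exactly when every leaf receives exactly one choice, i.e. when m
  plus the number of unary nodes above each leaf is 1.\<close>

definition open_terms :: "nat \<Rightarrow> motzkin \<Rightarrow> lmt set" where
  "open_terms m T = {t. skeleton t = T \<and> is_open m t}"

lemma open_terms_v: "open_terms m v = var ` {..<m}"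
  unfolding open_terms_def
proof (intro set_eqI iffI)
  fix t assume "t \<in> {t. skeleton t = v \<and> is_open m t}"
  then show "t \<in> var ` {..<m}" by (cases t) auto
qed auto

lemma open_terms_l: "open_terms m (l T) = lam ` open_terms (Suc m) T"
  unfolding open_terms_def
proof (intro set_eqI iffI)
  fix t assume "t \<in> {t. skeleton t = l T \<and> is_open m t}"
  then show "t \<in> lam ` {s. skeleton s = T \<and> is_open (Suc m) s}" by (cases t) auto
qed auto

lemma open_terms_a:
  "open_terms m (a T1 T2) = case_prod app ` (open_terms m T1 \<times> open_terms m T2)"
  unfolding open_terms_def
proof (intro set_eqI iffI)
  fix t assume "t \<in> {t. skeleton t = a T1 T2 \<and> is_open m t}"
  then show "t \<in> case_prod app ` ({s. skeleton s = T1 \<and> is_open m s} \<times>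
                                   {s. skeleton s = T2 \<and> is_open m s})"
    by (cases t) auto
qed auto

lemma is_singleton_image_iff: "inj_on f A \<Longrightarrow> is_singleton (f ` A) \<longleftrightarrow> is_singleton A"
  by (simp add: is_singleton_altdef card_image)

lemma is_singleton_Times_iff: "is_singleton (A \<times> B) \<longleftrightarrow> is_singleton A \<and> is_singleton B"
  by (simp add: is_singleton_altdef card_cartesian_product)

lemma is_singleton_lessThan_iff: "is_singleton {..<m::nat} \<longleftrightarrow> m = 1"
  by (simp add: is_singleton_altdef)

lemma ucs1_aux_v: "ucs1_aux v m \<longleftrightarrow> m = 1"
  by (simp add: ucs1_aux_def)

lemma ucs1_aux_l: "ucs1_aux (l T) m \<longleftrightarrow> ucs1_aux T (Suc m)"
  by (simp add: ucs1_aux_def)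

lemma ucs1_aux_a: "ucs1_aux (a T1 T2) m \<longleftrightarrow> ucs1_aux T1 m \<and> ucs1_aux T2 m"
  by (auto simp add: ucs1_aux_def)

lemma is_singleton_open_terms_iff: "is_singleton (open_terms m T) \<longleftrightarrow> ucs1_aux T m"
proof (induction T arbitrary: m)
  case v
  have "inj var" by (simp add: inj_def)
  then show ?case
    by (simp add: open_terms_v is_singleton_image_iff[OF inj_on_subset] is_singleton_lessThan_iff
        ucs1_aux_v)
next
  case (l T)
  have "inj lam" by (simp add: inj_def)
  then show ?case
    by (simp add: open_terms_l is_singleton_image_iff[OF inj_on_subset] l.IH ucs1_aux_l)
next
  case (a T1 T2)
  have "inj (case_prod app)" by (auto simp add: inj_def)
  then show ?case
    by (simp add: open_terms_a is_singleton_image_iff[OF inj_on_subset] is_singleton_Times_iff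
        a.IH ucs1_aux_a)
qed

theorem mainTheorem5:
  fixes T :: motzkin and m :: nat
  shows "(\<exists>!t. skeleton t = T \<and> is_open m t) \<longleftrightarrow> ucs1_aux T m"
  using is_singleton_open_terms_iff[of m T]
  by (simp add: is_singleton_iff_ex1 open_terms_def)

end
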